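(* Let $\mathcal Z\subseteq N$ be the set of all points $\gamma(t)$ ($t\neq0$) that are conjugate to $\gamma(0)=1$ along some geodesic $\gamma$ with $\gamma(0)=1$ and $\dot\gamma(0)=x_0\in\mathfrak v\setminus\{0\}$. Then $\mathcal Z\subseteq\exp(\mathfrak v)$, and $\mathcal Z$ is a real-analytic variety (a real-analytic subset) of the embedded submanifold $\exp(\mathfrak v)$ of $N$, where $\exp:\mathfrak n\to N$ is the Lie group exponential map.
   Context: Let $N$ be a connected, simply connected, 2-step nilpotent real Lie group with Lie algebra $\mathfrak n$ and center $\mathfrak z$; its Lie group exponential map $\exp:\mathfrak n\to N$ is a diffeomorphism. Let $\langle\,,\rangle$ be an inner product on $\mathfrak n$, meaning a nondegenerate symmetric bilinear form (possibly indefinite); the same symbol denotes the induced left-invariant pseudo-Riemannian metric on $N$, with Levi-Civita connection $\nabla$. Assume the restriction of $\langle\,,\rangle$ to $\mathfrak z$ is nondegenerate and put $\mathfrak v=\mathfrak z^\perp$, so $\mathfrak n=\mathfrak z\oplus\mathfrak v$. A Jacobi field along a geodesic $\gamma$ is a vector field $Y$ along $\gamma$ with $\nabla_{\dot\gamma}\nabla_{\dot\gamma}Y+R(Y,\dot\gamma)\dot\gamma=0$, where $R(X,Y)=\nabla_X\nabla_Y-\nabla_Y\nabla_X-\nabla_{[X,Y]}$; $\gamma(t_0)$ ($t_0\ne 0$) is conjugate to $\gamma(0)$ along $\gamma$ if some nontrivial Jacobi field vanishes at $0$ and $t_0$. *)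

theory Defs
  imports "HOL-Analysis.Analysis"
begin

(* The Lie algebra n is modelled by a finite-dimensional real vector
   space 'n::euclidean_space (its Euclidean inner product plays no role), with Lie
   bracket br and a (possibly indefinite) scalar product B.
   Since exp : n -> N is a diffeomorphism, N is identified with n via exp
   (exponential coordinates); in these coordinates the group law of a simply
   connected 2-step nilpotent group is  x * y = x + y + 1/2 [x,y]  (BCH), the
   identity element is 0, and exp(v) is the linear subspace v itself. *)

definition two_step_nilpotent :: "('n::euclidean_space \<Rightarrow> 'n \<Rightarrow> 'n) \<Rightarrow> bool" where
  "two_step_nilpotent br \<longleftrightarrow>
     bilinear br \<and> (\<forall>x y. br x y = - br y x) \<and>
     (\<forall>x y z. br (br x y) z = 0) \<and> (\<exists>x y. br x y \<noteq> 0)"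

definition scalar_product :: "('n::euclidean_space \<Rightarrow> 'n \<Rightarrow> real) \<Rightarrow> bool" where
  "scalar_product B \<longleftrightarrow> bilinear B \<and> (\<forall>x y. B x y = B y x) \<and>
     (\<forall>x. (\<forall>y. B x y = 0) \<longrightarrow> x = 0)"

definition center :: "('n::euclidean_space \<Rightarrow> 'n \<Rightarrow> 'n) \<Rightarrow> 'n set" where
  "center br = {z. \<forall>y. br z y = 0}"

definition orth_compl :: "('n::euclidean_space \<Rightarrow> 'n \<Rightarrow> real) \<Rightarrow> 'n set \<Rightarrow> 'n set" where
  "orth_compl B S = {x. \<forall>z\<in>S. B x z = 0}"

definition nondeg_on :: "('n::euclidean_space \<Rightarrow> 'n \<Rightarrow> real) \<Rightarrow> 'n set \<Rightarrow> bool" where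
  "nondeg_on B S \<longleftrightarrow> (\<forall>x\<in>S. (\<forall>y\<in>S. B x y = 0) \<longrightarrow> x = 0)"

definition gmult :: "('n::euclidean_space \<Rightarrow> 'n \<Rightarrow> 'n) \<Rightarrow> 'n \<Rightarrow> 'n \<Rightarrow> 'n" where
  "gmult br x y = x + y + (1/2) *\<^sub>R br x y"

(* inverse of the differential at 0 of left translation by p:
   d(L_p)_0 v = v + 1/2 [p,v], whose inverse is v - 1/2 [p,v] (2-step) *)
definition dLinv :: "('n::euclidean_space \<Rightarrow> 'n \<Rightarrow> 'n) \<Rightarrow> 'n \<Rightarrow> 'n \<Rightarrow> 'n" where
  "dLinv br p v = v - (1/2) *\<^sub>R br p v"

definition metric :: "('n::euclidean_space \<Rightarrow> 'n \<Rightarrow> 'n) \<Rightarrow> ('n \<Rightarrow> 'n \<Rightarrow> real)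
     \<Rightarrow> 'n \<Rightarrow> 'n \<Rightarrow> 'n \<Rightarrow> real" where
  "metric br B p v w = B (dLinv br p v) (dLinv br p w)"

definition dmetric :: "('n::euclidean_space \<Rightarrow> 'n \<Rightarrow> 'n) \<Rightarrow> ('n \<Rightarrow> 'n \<Rightarrow> real)
     \<Rightarrow> 'n \<Rightarrow> 'n \<Rightarrow> 'n \<Rightarrow> 'n \<Rightarrow> real" where
  "dmetric br B p a v w =
     (THE d. ((\<lambda>s. metric br B (p + s *\<^sub>R a) v w) has_real_derivative d) (at 0))"

(* Christoffel symbols of the Levi-Civita connection in coordinates:
   Gamma p v w = nabla_v w for constant coordinate fields v, w, i.e.
   g(Gamma(v,w), z) = 1/2 (D_v g(w,z) + D_w g(v,z) - D_z g(v,w)) *)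
definition christoffel :: "('n::euclidean_space \<Rightarrow> 'n \<Rightarrow> 'n) \<Rightarrow> ('n \<Rightarrow> 'n \<Rightarrow> real)
     \<Rightarrow> 'n \<Rightarrow> 'n \<Rightarrow> 'n \<Rightarrow> 'n" where
  "christoffel br B p v w =
     (THE u. \<forall>z. metric br B p u z =
        (1/2) * (dmetric br B p v w z + dmetric br B p w v z - dmetric br B p z v w))"

definition dchristoffel :: "('n::euclidean_space \<Rightarrow> 'n \<Rightarrow> 'n) \<Rightarrow> ('n \<Rightarrow> 'n \<Rightarrow> real)
     \<Rightarrow> 'n \<Rightarrow> 'n \<Rightarrow> 'n \<Rightarrow> 'n \<Rightarrow> 'n" where
  "dchristoffel br B p a v w =
     (THE d. ((\<lambda>s. christoffel br B (p + s *\<^sub>R a) v w) has_vector_derivative d) (at 0))"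

(* Curvature R(v,w)z = nabla_v nabla_w z - nabla_w nabla_v z - nabla_[v,w] z at p,
   computed with constant coordinate fields (whose coordinate bracket vanishes). *)
definition curv :: "('n::euclidean_space \<Rightarrow> 'n \<Rightarrow> 'n) \<Rightarrow> ('n \<Rightarrow> 'n \<Rightarrow> real)
     \<Rightarrow> 'n \<Rightarrow> 'n \<Rightarrow> 'n \<Rightarrow> 'n \<Rightarrow> 'n" where
  "curv br B p v w z =
       dchristoffel br B p v w z + christoffel br B p v (christoffel br B p w z)
     - dchristoffel br B p w v z - christoffel br B p w (christoffel br B p v z)"

definition vel :: "(real \<Rightarrow> 'n::euclidean_space) \<Rightarrow> real \<Rightarrow> 'n" where
  "vel c t = vector_derivative c (at t)"

definition geodesic_on :: "('n::euclidean_space \<Rightarrow> 'n \<Rightarrow> 'n) \<Rightarrow> ('n \<Rightarrow> 'n \<Rightarrow> real)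
     \<Rightarrow> real set \<Rightarrow> (real \<Rightarrow> 'n) \<Rightarrow> bool" where
  "geodesic_on br B I \<gamma> \<longleftrightarrow>
     (\<forall>t\<in>I. \<gamma> differentiable (at t) \<and>
        (\<exists>a. (vel \<gamma> has_vector_derivative a) (at t) \<and>
             a + christoffel br B (\<gamma> t) (vel \<gamma> t) (vel \<gamma> t) = 0))"

definition covder :: "('n::euclidean_space \<Rightarrow> 'n \<Rightarrow> 'n) \<Rightarrow> ('n \<Rightarrow> 'n \<Rightarrow> real)
     \<Rightarrow> (real \<Rightarrow> 'n) \<Rightarrow> (real \<Rightarrow> 'n) \<Rightarrow> real \<Rightarrow> 'n" where
  "covder br B \<gamma> Y t = vel Y t + christoffel br B (\<gamma> t) (vel \<gamma> t) (Y t)"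

definition jacobi_on :: "('n::euclidean_space \<Rightarrow> 'n \<Rightarrow> 'n) \<Rightarrow> ('n \<Rightarrow> 'n \<Rightarrow> real)
     \<Rightarrow> real set \<Rightarrow> (real \<Rightarrow> 'n) \<Rightarrow> (real \<Rightarrow> 'n) \<Rightarrow> bool" where
  "jacobi_on br B I \<gamma> Y \<longleftrightarrow>
     (\<forall>t\<in>I. Y differentiable (at t) \<and> covder br B \<gamma> Y differentiable (at t) \<and>
        covder br B \<gamma> (covder br B \<gamma> Y) t
          + curv br B (\<gamma> t) (Y t) (vel \<gamma> t) (vel \<gamma> t) = 0)"

definition conjugate_along :: "('n::euclidean_space \<Rightarrow> 'n \<Rightarrow> 'n) \<Rightarrow> ('n \<Rightarrow> 'n \<Rightarrow> real)
     \<Rightarrow> real set \<Rightarrow> (real \<Rightarrow> 'n) \<Rightarrow> real \<Rightarrow> bool" where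
  "conjugate_along br B I \<gamma> t0 \<longleftrightarrow>
     (\<exists>Y. jacobi_on br B I \<gamma> Y \<and> (\<exists>t\<in>I. Y t \<noteq> 0) \<and> Y 0 = 0 \<and> Y t0 = 0)"

definition conj_locus :: "('n::euclidean_space \<Rightarrow> 'n \<Rightarrow> 'n) \<Rightarrow> ('n \<Rightarrow> 'n \<Rightarrow> real) \<Rightarrow> 'n set" where
  "conj_locus br B =
     {\<gamma> t | \<gamma> I t. is_interval I \<and> open I \<and> 0 \<in> I \<and> t \<in> I \<and> t \<noteq> 0 \<and>
        geodesic_on br B I \<gamma> \<and> \<gamma> 0 = 0 \<and>
        vel \<gamma> 0 \<in> orth_compl B (center br) - {0} \<and>
        conjugate_along br B I \<gamma> t}"

definition multi_indices :: "('n::euclidean_space \<Rightarrow> nat) set" where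
  "multi_indices = {\<alpha>. \<forall>i. i \<notin> Basis \<longrightarrow> \<alpha> i = 0}"

definition monom :: "'n::euclidean_space \<Rightarrow> ('n \<Rightarrow> nat) \<Rightarrow> real" where
  "monom h \<alpha> = (\<Prod>i\<in>Basis. (h \<bullet> i) ^ \<alpha> i)"

definition real_analytic_at :: "('n::euclidean_space \<Rightarrow> real) \<Rightarrow> 'n \<Rightarrow> bool" where
  "real_analytic_at f p \<longleftrightarrow>
     (\<exists>r>0. \<exists>c. \<forall>h. norm h < r \<longrightarrow>
        ((\<lambda>\<alpha>. c \<alpha> * monom h \<alpha>) has_sum f (p + h)) multi_indices)"

definition real_analytic_on :: "'n::euclidean_space set \<Rightarrow> ('n \<Rightarrow> real) \<Rightarrow> bool" where
  "real_analytic_on U f \<longleftrightarrow> (\<forall>p\<in>U. real_analytic_at f p)"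

(* Z is a real-analytic subset (variety) of the embedded submanifold V (here a linear
   subspace): Z is contained in V and near each point of V it is the common zero set
   in V of finitely many real-analytic functions.  (Analytic functions on open subsets
   of a linear subspace V are exactly restrictions of ambient ones.) *)
definition real_analytic_subset :: "'n::euclidean_space set \<Rightarrow> 'n set \<Rightarrow> bool" where
  "real_analytic_subset V Z \<longleftrightarrow> Z \<subseteq> V \<and>
     (\<forall>p\<in>V. \<exists>U F. open U \<and> p \<in> U \<and> finite F \<and> (\<forall>f\<in>F. real_analytic_on U f) \<and>
        Z \<inter> U = {x \<in> V \<inter> U. \<forall>f\<in>F. f x = 0})"

end

theory Submission
  imports Defs "Jordan_Normal_Form.Determinant"
begin

text \<open>
  Work in exponential coordinates, where the group law is x y = x + y + [x, y]/2, and write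
  z for the center and v for its B-orthogonal complement. A geodesic through the identity with
  initial velocity x0 in v is the line t x0: its left-translated velocity e solves the
  Euler-Arnold equation e' = j(e) \<gamma>', which keeps e in v, where j(e) = 0; so e is constant.
  Along this line the left-translated Jacobi field y = Y - t/2 [x0, Y] solves a linear ODE with
  polynomial coefficients. Its z- and v-components decouple through the first integrals
  c = proj_z y' + [x0, y] and u = proj_v y' - t j(c) x0, and integrating them shows that
  a Jacobi field with Y(0) = 0 vanishes at t \<noteq> 0 iff u = -t/2 j(c) x0 and
  c + t^2/12 [x0, j(c) x0] = 0. So the conjugate locus is the set of x in v at which the
  linear map c \<mapsto> c + [x, j(c) x]/12 is singular, i.e. the zero set in v of a polynomial
  determinant.
\<close>

section \<open>Calculus and linear algebra on Euclidean spaces\<close>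

lemma antiderivative_unique_on_interval:
  fixes f g :: "real \<Rightarrow> 'a::real_normed_vector"
  assumes "is_interval I" "a \<in> I" "t \<in> I"
    and "\<And>s. s \<in> I \<Longrightarrow> (f has_vector_derivative h s) (at s)"
    and "\<And>s. s \<in> I \<Longrightarrow> (g has_vector_derivative h s) (at s)"
    and "f a = g a"
  shows "f t = g t"
proof -
  have deriv: "((\<lambda>s. f s - g s) has_vector_derivative 0) (at s within I)" if "s \<in> I" for s
    using has_vector_derivative_diff[OF assms(4,5)[OF that]]
    by (simp add: has_vector_derivative_at_within)
  obtain c where c: "\<And>s. s \<in> I \<Longrightarrow> f s - g s = c"
    using has_vector_derivative_zero_constant[OF is_interval_convex[OF assms(1)] deriv] by blast
  have "f t - g t = f a - g a"
    using c assms(2,3) by simp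
  then show ?thesis
    using assms(6) by simp
qed

lemma THE_vector_derivative_quadratic:
  fixes a b c :: "'a::real_normed_vector"
  shows "(THE d. ((\<lambda>s. a + s *\<^sub>R b + s\<^sup>2 *\<^sub>R c) has_vector_derivative d) (at 0)) = b"
proof (rule the_equality)
  show "((\<lambda>s. a + s *\<^sub>R b + s\<^sup>2 *\<^sub>R c) has_vector_derivative b) (at 0)"
    by (auto intro!: derivative_eq_intros)
  then show "d = b" if "((\<lambda>s. a + s *\<^sub>R b + s\<^sup>2 *\<^sub>R c) has_vector_derivative d) (at 0)" for d
    using that vector_derivative_unique_at by blast
qed

lemma eventually_eq_on_open:
  assumes "open I" "s \<in> I" "\<And>t. t \<in> I \<Longrightarrow> f t = g t"
  shows "\<forall>\<^sub>F t in nhds s. t \<in> A \<longrightarrow> f t = g t"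
  by (rule eventually_mono[OF eventually_nhds_in_open[OF assms(1,2)]]) (simp add: assms(3))

lemma vel_cong_on_open:
  assumes "open I" "s \<in> I" "\<And>t. t \<in> I \<Longrightarrow> f t = g t"
  shows "vel f s = vel g s"
  unfolding vel_def
  by (rule vector_derivative_cong_eq[OF eventually_eq_on_open[OF assms]]) simp_all

lemma differentiable_cong_on_open:
  fixes f g :: "real \<Rightarrow> 'a::real_normed_vector"
  assumes "open I" "s \<in> I" "\<And>t. t \<in> I \<Longrightarrow> f t = g t"
  shows "f differentiable (at s) \<longleftrightarrow> g differentiable (at s)"
proof -
  have "(f has_vector_derivative D) (at s) \<longleftrightarrow> (g has_vector_derivative D) (at s)" for D
    by (rule has_vector_derivative_cong_ev[OF eventually_eq_on_open[OF assms]])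
       (use assms in auto)
  then show ?thesis
    by (simp add: differentiable_iff_scaleR has_vector_derivative_def[symmetric])
qed

lemma has_vector_derivative_vel:
  "f differentiable (at t) \<Longrightarrow> (f has_vector_derivative vel f t) (at t)"
  unfolding vel_def by (rule vector_derivative_works[THEN iffD1])

lemma linear_functional_eq_inner:
  fixes \<phi> :: "'a::euclidean_space \<Rightarrow> real"
  assumes "linear \<phi>"
  shows "\<phi> z = inner (\<Sum>i\<in>Basis. \<phi> i *\<^sub>R i) z"
proof -
  have "\<phi> z = \<phi> (\<Sum>i\<in>Basis. inner z i *\<^sub>R i)"
    by (simp add: euclidean_representation)
  also have "\<dots> = (\<Sum>i\<in>Basis. \<phi> i * inner i z)"
    by (simp add: linear_sum[OF assms] linear_scale[OF assms] inner_commute mult.commute)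
  also have "\<dots> = inner (\<Sum>i\<in>Basis. \<phi> i *\<^sub>R i) z"
    by (simp add: inner_sum_left)
  finally show ?thesis .
qed

lemma scalar_product_inner_representation:
  fixes B :: "'a::euclidean_space \<Rightarrow> 'a \<Rightarrow> real"
  assumes B: "scalar_product B"
  obtains R where "linear R" "inj R" "\<And>w z. B w z = inner (R w) z"
proof
  define R where "R w = (\<Sum>i\<in>Basis. B w i *\<^sub>R i)" for w
  have lin: "linear (B w)" "linear (\<lambda>w. B w z)" for w z
    using B unfolding scalar_product_def bilinear_def by blast+
  show R: "B w z = inner (R w) z" for w z
    unfolding R_def by (rule linear_functional_eq_inner[OF lin(1)])
  show "linear R"
    unfolding R_def
    by (rule linearI) (simp_all add: linear_add[OF lin(2)] linear_scale[OF lin(2)]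
        scaleR_add_left sum.distrib scaleR_sum_right)
  show "inj R"
  proof (rule injI)
    fix x y
    assume "R x = R y"
    then have "B x z = B y z" for z
      by (simp only: R)
    then have "B (x - y) z = 0" for z
      by (simp add: linear_diff[OF lin(2)])
    then have "x - y = 0"
      using B unfolding scalar_product_def by blast
    then show "x = y"
      by simp
  qed
qed

lemma scalar_product_represents_functional:
  fixes B :: "'a::euclidean_space \<Rightarrow> 'a \<Rightarrow> real"
  assumes "scalar_product B" and "linear \<phi>"
  shows "\<exists>w. \<forall>z. B w z = \<phi> z"
proof -
  obtain R where R: "linear R" "inj R" "\<And>w z. B w z = inner (R w) z"
    using scalar_product_inner_representation[OF assms(1)] by blast
  have "surj R"
    by (rule linear_injective_imp_surjective[OF R(1,2) refl])
  then obtain w where w: "(\<Sum>i\<in>Basis. \<phi> i *\<^sub>R i) = R w"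
    unfolding surj_def by blast
  have "B w z = \<phi> z" for z
    unfolding R(3) w[symmetric] by (rule linear_functional_eq_inner[OF assms(2), symmetric])
  then show ?thesis
    by blast
qed

lemma orth_compl_decomposition:
  fixes B :: "'a::euclidean_space \<Rightarrow> 'a \<Rightarrow> real"
  assumes B: "scalar_product B" and S: "subspace S" and nondeg: "nondeg_on B S"
  shows "\<exists>c\<in>S. y - c \<in> orth_compl B S"
proof -
  let ?V = "orth_compl B S"
  obtain R where R: "linear R" "inj R" "\<And>w z. B w z = inner (R w) z"
    using scalar_product_inner_representation[OF B] by blast
  have V: "subspace ?V"
    unfolding subspace_def orth_compl_def
    by (simp add: R(3) linear_add[OF R(1)] linear_scale[OF R(1)] linear_0[OF R(1)] inner_add_left)
  have sym: "B x y = B y x" for x y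
    using B unfolding scalar_product_def by blast
  have "?V = {y. \<forall>x\<in>R ` S. Linear_Algebra.orthogonal x y}"
    unfolding orth_compl_def Linear_Algebra.orthogonal_def
    by (auto simp: R(3)[symmetric] sym)
  then have "dim ?V + dim (R ` S) = DIM('a)"
    using dim_subspace_orthogonal_to_vectors[OF linear_subspace_image[OF R(1) S] subspace_UNIV]
    by (simp add: dim_UNIV)
  moreover have "dim (R ` S) = dim S"
    using dim_image_eq[OF R(1)] R(2) by (simp add: inj_on_def inj_def)
  moreover have "S \<inter> ?V = {0}"
    using nondeg subspace_0[OF S] subspace_0[OF V]
    unfolding nondeg_on_def orth_compl_def by auto
  ultimately have "dim {x + v |x v. x \<in> S \<and> v \<in> ?V} = DIM('a)"
    using dim_sums_Int[OF S V] by simp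
  then have "{x + v |x v. x \<in> S \<and> v \<in> ?V} = UNIV"
    using span_eq_iff[THEN iffD2, OF subspace_sums[OF S V]] by (simp add: dim_eq_full)
  then obtain c v where "c \<in> S" "v \<in> ?V" "y = c + v"
    by blast
  then show ?thesis
    by (intro bexI[of _ c]) simp_all
qed

section \<open>Polynomial functions are real-analytic\<close>

definition finite_expansion_at :: "('a::euclidean_space \<Rightarrow> real) \<Rightarrow> 'a \<Rightarrow> bool" where
  "finite_expansion_at f p \<longleftrightarrow> (\<exists>S c. finite S \<and> S \<subseteq> multi_indices \<and>
      (\<forall>h. f (p + h) = (\<Sum>\<alpha>\<in>S. c \<alpha> * monom h \<alpha>)))"

lemma monom_zero [simp]: "monom h (\<lambda>_. 0) = 1"
  by (simp add: monom_def)

lemma monom_add: "monom h (\<lambda>j. \<alpha> j + \<beta> j) = monom h \<alpha> * monom h \<beta>"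
  by (simp add: monom_def power_add prod.distrib)

lemma monom_unit:
  assumes "i \<in> Basis"
  shows "monom h (\<lambda>j. if j = i then 1 else 0) = inner h i"
proof -
  have "monom h (\<lambda>j. if j = i then 1 else 0) = (\<Prod>j\<in>Basis. if j = i then inner h j else 1)"
    unfolding monom_def by (rule prod.cong) auto
  then show ?thesis
    using assms by (simp add: prod.delta)
qed

lemma finite_expansion_const: "finite_expansion_at (\<lambda>x. k) p"
  unfolding finite_expansion_at_def
  by (intro exI[of _ "{\<lambda>_. 0}"] exI[of _ "\<lambda>_. k"]) (simp add: multi_indices_def)

lemma finite_expansion_coord:
  assumes i: "i \<in> Basis"
  shows "finite_expansion_at (\<lambda>x. inner x i) p"
proof -
  define e :: "'a \<Rightarrow> nat" where "e = (\<lambda>j. if j = i then 1 else 0)"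
  have "(\<lambda>_. 0) \<noteq> e"
    using fun_cong[of "\<lambda>_. 0" e i] by (auto simp: e_def)
  then have "inner (p + h) i = (\<Sum>\<alpha>\<in>{\<lambda>_. 0, e}. (if \<alpha> = e then 1 else inner p i) * monom h \<alpha>)" for h
    using monom_unit[OF i, of h, folded e_def] by (simp add: inner_add_left)
  moreover have "{\<lambda>_. 0, e} \<subseteq> multi_indices"
    using i by (auto simp: multi_indices_def e_def)
  ultimately show ?thesis
    unfolding finite_expansion_at_def
    by (intro exI[of _ "{\<lambda>_. 0, e}"] exI[of _ "\<lambda>\<alpha>. if \<alpha> = e then 1 else inner p i"]) simp
qed

lemma finite_expansion_add:
  assumes "finite_expansion_at f p" "finite_expansion_at g p"
  shows "finite_expansion_at (\<lambda>x. f x + g x) p"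
proof -
  obtain S1 c1 where S1: "finite S1" "S1 \<subseteq> multi_indices"
    and f: "\<And>h. f (p + h) = (\<Sum>\<alpha>\<in>S1. c1 \<alpha> * monom h \<alpha>)"
    using assms(1) unfolding finite_expansion_at_def by blast
  obtain S2 c2 where S2: "finite S2" "S2 \<subseteq> multi_indices"
    and g: "\<And>h. g (p + h) = (\<Sum>\<alpha>\<in>S2. c2 \<alpha> * monom h \<alpha>)"
    using assms(2) unfolding finite_expansion_at_def by blast
  define c where "c \<alpha> = (if \<alpha> \<in> S1 then c1 \<alpha> else 0) + (if \<alpha> \<in> S2 then c2 \<alpha> else 0)" for \<alpha>
  have "f (p + h) + g (p + h) = (\<Sum>\<alpha>\<in>S1 \<union> S2. c \<alpha> * monom h \<alpha>)" for h
  proof -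
    have "(\<Sum>\<alpha>\<in>S1 \<union> S2. (if \<alpha> \<in> S1 then c1 \<alpha> else 0) * monom h \<alpha>) = f (p + h)"
      unfolding f by (rule sum.mono_neutral_cong_right) (use S1 S2 in auto)
    moreover have "(\<Sum>\<alpha>\<in>S1 \<union> S2. (if \<alpha> \<in> S2 then c2 \<alpha> else 0) * monom h \<alpha>) = g (p + h)"
      unfolding g by (rule sum.mono_neutral_cong_right) (use S1 S2 in auto)
    ultimately show ?thesis
      unfolding c_def distrib_right sum.distrib by simp
  qed
  then show ?thesis
    unfolding finite_expansion_at_def using S1 S2
    by (intro exI[of _ "S1 \<union> S2"] exI[of _ c]) simp
qed

lemma finite_expansion_mult:
  assumes "finite_expansion_at f p" "finite_expansion_at g p"
  shows "finite_expansion_at (\<lambda>x. f x * g x) p"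
proof -
  obtain S1 c1 where S1: "finite S1" "S1 \<subseteq> multi_indices"
    and f: "\<And>h. f (p + h) = (\<Sum>\<alpha>\<in>S1. c1 \<alpha> * monom h \<alpha>)"
    using assms(1) unfolding finite_expansion_at_def by blast
  obtain S2 c2 where S2: "finite S2" "S2 \<subseteq> multi_indices"
    and g: "\<And>h. g (p + h) = (\<Sum>\<alpha>\<in>S2. c2 \<alpha> * monom h \<alpha>)"
    using assms(2) unfolding finite_expansion_at_def by blast
  define P where "P = S1 \<times> S2"
  define plus :: "('a \<Rightarrow> nat) \<times> ('a \<Rightarrow> nat) \<Rightarrow> 'a \<Rightarrow> nat"
    where "plus = (\<lambda>(\<alpha>, \<beta>) j. \<alpha> j + \<beta> j)"
  define c where "c \<gamma> = (\<Sum>x\<in>{x \<in> P. plus x = \<gamma>}. c1 (fst x) * c2 (snd x))" for \<gamma>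
  have "finite P"
    using S1 S2 by (simp add: P_def)
  have "f (p + h) * g (p + h) = (\<Sum>\<gamma>\<in>plus ` P. c \<gamma> * monom h \<gamma>)" for h
  proof -
    have "f (p + h) * g (p + h) = (\<Sum>(\<alpha>, \<beta>)\<in>P. (c1 \<alpha> * monom h \<alpha>) * (c2 \<beta> * monom h \<beta>))"
      unfolding f g P_def sum_product sum.cartesian_product ..
    also have "\<dots> = (\<Sum>x\<in>P. c1 (fst x) * c2 (snd x) * monom h (plus x))"
      by (rule sum.cong) (auto simp: plus_def monom_add mult_ac)
    also have "\<dots> = (\<Sum>\<gamma>\<in>plus ` P.
        \<Sum>x\<in>{x \<in> P. plus x = \<gamma>}. c1 (fst x) * c2 (snd x) * monom h (plus x))"
      by (rule sum.image_gen[OF \<open>finite P\<close>])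
    also have "\<dots> = (\<Sum>\<gamma>\<in>plus ` P. c \<gamma> * monom h \<gamma>)"
      unfolding c_def sum_distrib_right by (intro sum.cong refl) auto
    finally show ?thesis .
  qed
  moreover have "plus ` P \<subseteq> multi_indices"
    using S1(2) S2(2) by (auto simp: P_def plus_def multi_indices_def)
  ultimately show ?thesis
    unfolding finite_expansion_at_def using \<open>finite P\<close>
    by (intro exI[of _ "plus ` P"] exI[of _ c]) simp
qed

lemma finite_expansion_sum:
  "finite S \<Longrightarrow> (\<And>i. i \<in> S \<Longrightarrow> finite_expansion_at (f i) p) \<Longrightarrow>
    finite_expansion_at (\<lambda>x. \<Sum>i\<in>S. f i x) p"
  by (induction S rule: finite_induct) (simp_all add: finite_expansion_const finite_expansion_add)

lemma real_polynomial_function_finite_expansion: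
  fixes f :: "'a::euclidean_space \<Rightarrow> real"
  assumes "real_polynomial_function f"
  shows "finite_expansion_at f p"
  using assms
proof (induction f rule: real_polynomial_function.induct)
  case (linear f)
  have "f x = (\<Sum>i\<in>Basis. f i * inner x i)" for x
  proof -
    have "f x = inner (\<Sum>i\<in>Basis. f i *\<^sub>R i) x"
      by (rule linear_functional_eq_inner[OF bounded_linear.linear[OF linear]])
    also have "\<dots> = (\<Sum>i\<in>Basis. f i * inner x i)"
      by (simp add: inner_sum_left) (simp add: inner_commute)
    finally show ?thesis .
  qed
  then have eq: "f = (\<lambda>x. \<Sum>i\<in>Basis. f i * inner x i)"
    by (rule ext)
  have "finite_expansion_at (\<lambda>x. \<Sum>i\<in>Basis. f i * inner x i) p"
    by (intro finite_expansion_sum finite_expansion_mult finite_expansion_const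
        finite_expansion_coord finite_Basis)
  then show ?case
    by (subst eq)
next
  case (const c)
  show ?case
    by (rule finite_expansion_const)
next
  case (add f g)
  then show ?case
    by (intro finite_expansion_add)
next
  case (mult f g)
  then show ?case
    by (intro finite_expansion_mult)
qed

lemma real_polynomial_function_analytic:
  fixes f :: "'a::euclidean_space \<Rightarrow> real"
  assumes "real_polynomial_function f"
  shows "real_analytic_at f p"
proof -
  obtain S c where S: "finite S" "S \<subseteq> multi_indices"
    and f: "\<And>h. f (p + h) = (\<Sum>\<alpha>\<in>S. c \<alpha> * monom h \<alpha>)"
    using real_polynomial_function_finite_expansion[OF assms, of p]
    unfolding finite_expansion_at_def by blast
  define c' where "c' \<alpha> = (if \<alpha> \<in> S then c \<alpha> else 0)" for \<alpha>
  have "((\<lambda>\<alpha>. c' \<alpha> * monom h \<alpha>) has_sum f (p + h)) multi_indices" for h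
    unfolding f by (rule has_sum_finite_neutralI[OF S]) (simp_all add: c'_def)
  then show ?thesis
    unfolding real_analytic_at_def
    by (intro exI[of _ "1::real"] conjI exI[of _ c'] allI impI) simp_all
qed

lemma real_polynomial_function_bilinear_diag:
  fixes q :: "'a::euclidean_space \<Rightarrow> 'a \<Rightarrow> real"
  assumes "bilinear q"
  shows "real_polynomial_function (\<lambda>x. q x x)"
proof -
  have "q x x = (\<Sum>(i, k)\<in>Basis \<times> Basis. inner x i * inner x k * q i k)" for x
  proof -
    have "q x x = q (\<Sum>i\<in>Basis. inner x i *\<^sub>R i) (\<Sum>k\<in>Basis. inner x k *\<^sub>R k)"
      by (simp add: euclidean_representation)
    also have "\<dots> = (\<Sum>(i, k)\<in>Basis \<times> Basis. inner x i * inner x k * q i k)"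
      by (simp add: bilinear_sum[OF assms] bilinear_lmul[OF assms] bilinear_rmul[OF assms]
          case_prod_beta mult_ac)
    finally show ?thesis .
  qed
  then have eq: "(\<lambda>x. q x x) = (\<lambda>x. \<Sum>(i, k)\<in>Basis \<times> Basis. inner x i * inner x k * q i k)"
    by (rule ext)
  have coord: "real_polynomial_function (\<lambda>x. inner x i)" for i :: 'a
    by (rule real_polynomial_function.intros(1)) (rule bounded_linear_inner_left)
  have "real_polynomial_function (\<lambda>x. \<Sum>(i, k)\<in>Basis \<times> Basis. inner x i * inner x k * q i k)"
    unfolding case_prod_beta
    by (intro real_polynomial_function_sum real_polynomial_function.intros(2,4) coord
        finite_cartesian_product finite_Basis)
  then show ?thesis
    by (subst eq)
qed

section \<open>Determinants of linear endomorphisms\<close>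

definition basis_list :: "'a::euclidean_space list" where
  "basis_list = (SOME xs. set xs = Basis \<and> distinct xs)"

lemma basis_list:
  "set (basis_list :: 'a::euclidean_space list) = Basis" "distinct (basis_list :: 'a list)"
proof -
  have "\<exists>xs. set xs = (Basis :: 'a set) \<and> distinct xs"
    by (rule finite_distinct_list) simp
  then have "set (basis_list :: 'a list) = Basis \<and> distinct (basis_list :: 'a list)"
    unfolding basis_list_def by (rule someI_ex)
  then show "set (basis_list :: 'a list) = Basis" "distinct (basis_list :: 'a list)"
    by simp_all
qed

lemma length_basis_list [simp]: "length (basis_list :: 'a::euclidean_space list) = DIM('a)"
  using distinct_card[OF basis_list(2)[where 'a='a]] basis_list(1)[where 'a='a] by simp

lemma basis_list_nth_in_Basis: "j < DIM('a) \<Longrightarrow> (basis_list ! j :: 'a::euclidean_space) \<in> Basis"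
  using nth_mem[of j "basis_list :: 'a list"] basis_list(1)[where 'a='a] by simp

lemma inner_basis_list:
  assumes "i < DIM('a)" "j < DIM('a)"
  shows "inner (basis_list ! j) (basis_list ! i :: 'a::euclidean_space) = (if i = j then 1 else 0)"
proof -
  have "(basis_list ! j = (basis_list ! i :: 'a)) = (j = i)"
    using nth_eq_iff_index_eq[OF basis_list(2)] assms by simp
  then show ?thesis
    using inner_Basis[OF basis_list_nth_in_Basis[OF assms(2)] basis_list_nth_in_Basis[OF assms(1)]]
    by auto
qed

lemma sum_Basis_basis_list:
  "(\<Sum>b\<in>(Basis :: 'a::euclidean_space set). f b) = (\<Sum>j<DIM('a). f (basis_list ! j))"
proof -
  have "(\<Sum>j<DIM('a). f (basis_list ! j)) = sum f (nth basis_list ` {..<DIM('a)})"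
    by (rule sum.reindex[symmetric, unfolded comp_def]) (simp add: inj_on_nth basis_list(2))
  also have "nth basis_list ` {..<DIM('a)} = (Basis :: 'a set)"
    using basis_list(1) by (auto simp: set_conv_nth)
  finally show ?thesis
    by simp
qed

definition coord_vec :: "'a::euclidean_space \<Rightarrow> real vec" where
  "coord_vec y = vec DIM('a) (\<lambda>j. inner y (basis_list ! j))"

definition of_coord_vec :: "real vec \<Rightarrow> 'a::euclidean_space" where
  "of_coord_vec v = (\<Sum>j<DIM('a). vec_index v j *\<^sub>R basis_list ! j)"

definition coord_matrix :: "('a::euclidean_space \<Rightarrow> 'a) \<Rightarrow> real mat" where
  "coord_matrix N = mat DIM('a) DIM('a) (\<lambda>(i, j). inner (N (basis_list ! j)) (basis_list ! i))"

lemma of_coord_vec_coord_vec [simp]: "of_coord_vec (coord_vec y) = y"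
  using euclidean_representation[of y] sum_Basis_basis_list[of "\<lambda>b. inner y b *\<^sub>R b"]
  by (simp add: of_coord_vec_def coord_vec_def)

lemma coord_vec_of_coord_vec:
  assumes "v \<in> carrier_vec DIM('a)"
  shows "coord_vec (of_coord_vec v :: 'a::euclidean_space) = v"
proof (rule eq_vecI)
  fix i
  assume "i < dim_vec v"
  then have i: "i < DIM('a)"
    using assms by simp
  have "inner (of_coord_vec v :: 'a) (basis_list ! i)
      = (\<Sum>j<DIM('a). vec_index v j * (if i = j then 1 else 0))"
    unfolding of_coord_vec_def inner_sum_left
    by (intro sum.cong refl) (simp add: inner_basis_list[OF i])
  also have "\<dots> = vec_index v i"
    using i by (simp add: if_distrib[of "\<lambda>x. _ * x"] cong: if_cong)
  finally show "vec_index (coord_vec (of_coord_vec v :: 'a)) i = vec_index v i"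
    using i by (simp add: coord_vec_def)
qed (use assms in \<open>simp add: coord_vec_def\<close>)

lemma coord_matrix_mult_vec:
  fixes N :: "'a::euclidean_space \<Rightarrow> 'a"
  assumes "linear N" "v \<in> carrier_vec DIM('a)"
  shows "coord_matrix N *\<^sub>v v = coord_vec (N (of_coord_vec v))"
proof (rule eq_vecI)
  fix i
  assume "i < dim_vec (coord_vec (N (of_coord_vec v)))"
  then have i: "i < DIM('a)"
    by (simp add: coord_vec_def)
  have "vec_index (coord_matrix N *\<^sub>v v) i
      = (\<Sum>j<DIM('a). inner (N (basis_list ! j)) (basis_list ! i) * vec_index v j)"
    using assms(2) i by (simp add: coord_matrix_def scalar_prod_def atLeast0LessThan)
  also have "\<dots> = inner (N (of_coord_vec v)) (basis_list ! i)"
    by (simp add: of_coord_vec_def linear_sum[OF assms(1)] linear_scale[OF assms(1)]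
        inner_sum_left mult.commute)
  finally show "vec_index (coord_matrix N *\<^sub>v v) i = vec_index (coord_vec (N (of_coord_vec v))) i"
    using i by (simp add: coord_vec_def)
qed (simp add: coord_matrix_def coord_vec_def)

lemma det_coord_matrix_eq_0_iff:
  fixes N :: "'a::euclidean_space \<Rightarrow> 'a"
  assumes "linear N"
  shows "Determinant.det (coord_matrix N) = 0 \<longleftrightarrow> (\<exists>y. y \<noteq> 0 \<and> N y = 0)"
proof -
  have carrier: "coord_matrix N \<in> carrier_mat DIM('a) DIM('a)"
    by (simp add: coord_matrix_def)
  have coord_vec_0: "coord_vec y = 0\<^sub>v DIM('a) \<longleftrightarrow> y = 0" for y :: 'a
  proof
    assume "coord_vec y = 0\<^sub>v DIM('a)"
    then show "y = 0"
      using of_coord_vec_coord_vec[of y] by (simp add: of_coord_vec_def)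
  qed (simp add: coord_vec_def zero_vec_def)
  show ?thesis
    unfolding det_0_iff_vec_prod_zero_field[OF carrier]
  proof
    assume "\<exists>v. v \<in> carrier_vec DIM('a) \<and> v \<noteq> 0\<^sub>v DIM('a) \<and> coord_matrix N *\<^sub>v v = 0\<^sub>v DIM('a)"
    then obtain v where v: "v \<in> carrier_vec DIM('a)" "v \<noteq> 0\<^sub>v DIM('a)"
      and "coord_matrix N *\<^sub>v v = 0\<^sub>v DIM('a)"
      by blast
    then have "N (of_coord_vec v) = 0"
      using coord_vec_0 coord_matrix_mult_vec[OF assms v(1)] by simp
    moreover have "(of_coord_vec v :: 'a) \<noteq> 0"
      using coord_vec_0[of "of_coord_vec v"] coord_vec_of_coord_vec[OF v(1)] v(2) by simp
    ultimately show "\<exists>y. y \<noteq> 0 \<and> N y = 0"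
      by blast
  next
    assume "\<exists>y. y \<noteq> 0 \<and> N y = 0"
    then obtain y where "y \<noteq> 0" "N y = 0"
      by blast
    have v: "coord_vec y \<in> carrier_vec DIM('a)"
      by (simp add: coord_vec_def)
    moreover have "coord_vec y \<noteq> 0\<^sub>v DIM('a)"
      using coord_vec_0 \<open>y \<noteq> 0\<close> by simp
    moreover have "coord_matrix N *\<^sub>v coord_vec y = 0\<^sub>v DIM('a)"
      using coord_matrix_mult_vec[OF assms v] \<open>N y = 0\<close> coord_vec_0[of 0] by simp
    ultimately show
      "\<exists>v. v \<in> carrier_vec DIM('a) \<and> v \<noteq> 0\<^sub>v DIM('a) \<and> coord_matrix N *\<^sub>v v = 0\<^sub>v DIM('a)"
      by blast
  qed
qed

lemma real_polynomial_function_det_coord_matrix: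
  fixes N :: "'b::real_normed_vector \<Rightarrow> 'a::euclidean_space \<Rightarrow> 'a"
  assumes "\<And>i j. i < DIM('a) \<Longrightarrow> j < DIM('a) \<Longrightarrow>
      real_polynomial_function (\<lambda>x. inner (N x (basis_list ! j)) (basis_list ! i))"
  shows "real_polynomial_function (\<lambda>x. Determinant.det (coord_matrix (N x)))"
proof -
  let ?P = "{p. p permutes {0..<DIM('a)}}"
  have "Determinant.det (coord_matrix (N x)) = (\<Sum>p\<in>?P. signof p *
      (\<Prod>i = 0..<DIM('a). inner (N x (basis_list ! p i)) (basis_list ! i)))" for x
  proof -
    have "Determinant.det (coord_matrix (N x))
        = (\<Sum>p\<in>?P. signof p * (\<Prod>i = 0..<DIM('a). coord_matrix (N x) $$ (i, p i)))"
      by (rule det_def') (simp add: coord_matrix_def)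
    also have "\<dots> = (\<Sum>p\<in>?P. signof p *
        (\<Prod>i = 0..<DIM('a). inner (N x (basis_list ! p i)) (basis_list ! i)))"
      by (intro sum.cong refl arg_cong[where f="\<lambda>z. signof _ * z"] prod.cong)
         (auto simp: coord_matrix_def permutes_in_image)
    finally show ?thesis .
  qed
  then have eq: "(\<lambda>x. Determinant.det (coord_matrix (N x))) = (\<lambda>x. \<Sum>p\<in>?P. signof p *
      (\<Prod>i = 0..<DIM('a). inner (N x (basis_list ! p i)) (basis_list ! i)))"
    by (rule ext)
  have "real_polynomial_function (\<lambda>x. inner (N x (basis_list ! p i)) (basis_list ! i))"
    if "p \<in> ?P" "i \<in> {0..<DIM('a)}" for p i
    using that assms permutes_in_image[of p "{0..<DIM('a)}" i] by auto
  then have "real_polynomial_function (\<lambda>x. \<Sum>p\<in>?P. signof p *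
      (\<Prod>i = 0..<DIM('a). inner (N x (basis_list ! p i)) (basis_list ! i)))"
    by (intro real_polynomial_function_sum real_polynomial_function_prod
        real_polynomial_function.intros(2,4) finite_permutations finite_atLeastLessThan) auto
  then show ?thesis
    by (subst eq)
qed

section \<open>Two-step nilpotent Lie algebras with a scalar product\<close>

locale two_step_metric =
  fixes br :: "'n::euclidean_space \<Rightarrow> 'n \<Rightarrow> 'n" and B :: "'n \<Rightarrow> 'n \<Rightarrow> real"
  assumes two_step: "two_step_nilpotent br"
    and scalar_product: "scalar_product B"
    and center_nondeg: "nondeg_on B (center br)"
begin

sublocale br: bounded_bilinear br
  using two_step bilinear_conv_bounded_bilinear unfolding two_step_nilpotent_def by blast

sublocale B: bounded_bilinear B
  using scalar_product bilinear_conv_bounded_bilinear unfolding scalar_product_def by blast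

declare br.add_left [simp] br.add_right [simp] br.diff_left [simp] br.diff_right [simp]
  br.scaleR_left [simp] br.scaleR_right [simp] br.minus_left [simp] br.minus_right [simp]
  br.zero_left [simp] br.zero_right [simp]
  B.add_left [simp] B.add_right [simp] B.diff_left [simp] B.diff_right [simp]
  B.scaleR_left [simp] B.scaleR_right [simp] B.minus_left [simp] B.minus_right [simp]
  B.zero_left [simp] B.zero_right [simp]

lemma br_antisym: "br x y = - br y x"
  using two_step unfolding two_step_nilpotent_def by blast

lemma br_self [simp]: "br x x = 0"
  using br_antisym[of x x] by (simp add: eq_neg_iff_add_eq_0 flip: scaleR_2)

lemma br_br_left [simp]: "br (br x y) z = 0"
  using two_step unfolding two_step_nilpotent_def by blast

lemma br_br_right [simp]: "br z (br x y) = 0"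
  using br_antisym[of z "br x y"] by simp

lemma B_sym: "B x y = B y x"
  using scalar_product unfolding scalar_product_def by blast

lemma B_eqI: "(\<And>z. B x z = B y z) \<Longrightarrow> x = y"
  using scalar_product unfolding scalar_product_def
  by (metis B.diff_left right_minus_eq)

abbreviation C where "C \<equiv> center br"
abbreviation V where "V \<equiv> orth_compl B (center br)"

lemma br_in_center [simp]: "br x y \<in> C"
  by (simp add: center_def)

lemma center_br_left: "c \<in> C \<Longrightarrow> br c y = 0"
  by (simp add: center_def)

lemma center_br_right: "c \<in> C \<Longrightarrow> br y c = 0"
  using center_br_left br_antisym[of y c] by simp

lemma B_orth_center: "x \<in> V \<Longrightarrow> c \<in> C \<Longrightarrow> B x c = 0"
  by (simp add: orth_compl_def)

lemma subspace_center: "subspace C"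
  by (simp add: subspace_def center_def)

lemma subspace_orth_center: "subspace V"
  by (simp add: subspace_def orth_compl_def)

lemma center_inter_orth: "x \<in> C \<Longrightarrow> x \<in> V \<Longrightarrow> x = 0"
  using center_nondeg unfolding nondeg_on_def orth_compl_def by blast

text \<open>
  For a in the center, jmap a is the usual j-map j(a) of a 2-step nilpotent metric Lie algebra;
  the definition makes sense for all a.
\<close>

definition jmap :: "'n \<Rightarrow> 'n \<Rightarrow> 'n" where
  "jmap a v = (THE w. \<forall>z. B w z = B a (br v z))"

lemma B_jmap: "B (jmap a v) z = B a (br v z)"
proof -
  have "linear (\<lambda>z. B a (br v z))"
    by (rule linearI) simp_all
  then obtain w where w: "\<forall>z. B w z = B a (br v z)"
    using scalar_product_represents_functional[OF scalar_product] by blast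
  have "jmap a v = w"
    unfolding jmap_def by (rule the_equality) (use w B_eqI in auto)
  then show ?thesis
    using w by simp
qed

lemma jmap_eqI: "(\<And>z. B w z = B a (br v z)) \<Longrightarrow> jmap a v = w"
  by (rule B_eqI) (simp add: B_jmap)

sublocale j: bounded_bilinear jmap
proof -
  have "bilinear jmap"
    unfolding bilinear_def
    by (auto intro!: linearI jmap_eqI simp: B_jmap)
  then show "bounded_bilinear jmap"
    by (rule bilinear_conv_bounded_bilinear[THEN iffD1])
qed

declare j.add_left [simp] j.add_right [simp] j.diff_left [simp] j.diff_right [simp]
  j.scaleR_left [simp] j.scaleR_right [simp] j.minus_left [simp] j.minus_right [simp]
  j.zero_left [simp] j.zero_right [simp]

lemma jmap_in_orth_center [simp]: "jmap a v \<in> V"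
  by (simp add: orth_compl_def B_jmap center_br_right)

lemma jmap_orth_center_left: "a \<in> V \<Longrightarrow> jmap a v = 0"
  by (rule jmap_eqI) (simp add: B_orth_center)

lemma jmap_jmap_left [simp]: "jmap (jmap a v) u = 0"
  by (rule jmap_orth_center_left) simp

definition cproj :: "'n \<Rightarrow> 'n" where
  "cproj y = (THE c. c \<in> C \<and> y - c \<in> V)"

lemma cproj_eqI:
  assumes "c \<in> C" "y - c \<in> V"
  shows "cproj y = c"
proof -
  have uniq: "c' = c" if "c' \<in> C" "y - c' \<in> V" for c'
  proof -
    have "c' - c \<in> C"
      using subspace_diff[OF subspace_center that(1) assms(1)] .
    moreover have "c' - c \<in> V"
      using subspace_diff[OF subspace_orth_center assms(2) that(2)] by simp
    ultimately show ?thesis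
      using center_inter_orth[of "c' - c"] by simp
  qed
  show ?thesis
    unfolding cproj_def by (rule the_equality) (use assms uniq in blast)+
qed

lemma cproj_decomposition: "cproj y \<in> C" "y - cproj y \<in> V"
proof -
  obtain c where "c \<in> C" "y - c \<in> V"
    using orth_compl_decomposition[OF scalar_product subspace_center center_nondeg] by blast
  then show "cproj y \<in> C" "y - cproj y \<in> V"
    using cproj_eqI by simp_all
qed

sublocale cproj: bounded_linear cproj
proof -
  have "linear cproj"
  proof (rule linearI)
    show "cproj (x + y) = cproj x + cproj y" for x y
      using subspace_add[OF subspace_orth_center
          cproj_decomposition(2)[of x] cproj_decomposition(2)[of y]]
      by (intro cproj_eqI subspace_add[OF subspace_center] cproj_decomposition)
         (simp add: algebra_simps)
    show "cproj (r *\<^sub>R x) = r *\<^sub>R cproj x" for r x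
      using subspace_scale[OF subspace_orth_center cproj_decomposition(2)[of x], of r]
      by (intro cproj_eqI subspace_scale[OF subspace_center] cproj_decomposition)
         (simp add: algebra_simps)
  qed
  then show "bounded_linear cproj"
    by (rule linear_conv_bounded_linear[THEN iffD1])
qed

declare cproj.add [simp] cproj.diff [simp] cproj.scaleR [simp] cproj.neg [simp]
  cproj.zero [simp]

lemma cproj_center: "c \<in> C \<Longrightarrow> cproj c = c"
  by (rule cproj_eqI) (simp_all add: subspace_0[OF subspace_orth_center])

lemma cproj_orth_center: "v \<in> V \<Longrightarrow> cproj v = 0"
  by (rule cproj_eqI) (simp_all add: subspace_0[OF subspace_center])

lemma cproj_br [simp]: "cproj (br x y) = br x y"
  by (rule cproj_center) simp

lemma cproj_jmap [simp]: "cproj (jmap a v) = 0"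
  by (rule cproj_orth_center) simp

lemma jmap_cproj_left [simp]: "jmap (cproj y) v = jmap y v"
  using jmap_orth_center_left[OF cproj_decomposition(2)[of y], of v] by simp

lemma br_cproj_right [simp]: "br x (cproj y) = 0"
  by (rule center_br_right) (rule cproj_decomposition)

definition dL :: "'n \<Rightarrow> 'n \<Rightarrow> 'n" where
  "dL p v = v + (1/2) *\<^sub>R br p v"

lemma dLinv_scaleR [simp]: "dLinv br p (r *\<^sub>R v) = r *\<^sub>R dLinv br p v"
  by (simp add: dLinv_def algebra_simps)

lemma dLinv_minus [simp]: "dLinv br p (- v) = - dLinv br p v"
  by (simp add: dLinv_def)

lemma dL_dLinv [simp]: "dL p (dLinv br p v) = v"
  by (simp add: dL_def dLinv_def)

lemma dLinv_dL [simp]: "dLinv br p (dL p v) = v"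
  by (simp add: dL_def dLinv_def)

lemma dmetric_eq:
  "dmetric br B p a v w = -(1/2) * (B (br a v) (dLinv br p w) + B (dLinv br p v) (br a w))"
proof -
  have "(\<lambda>s. metric br B (p + s *\<^sub>R a) v w) = (\<lambda>s. B (dLinv br p v) (dLinv br p w)
      + s *\<^sub>R (-(1/2) * (B (br a v) (dLinv br p w) + B (dLinv br p v) (br a w)))
      + s\<^sup>2 *\<^sub>R ((1/4) * B (br a v) (br a w)))"
    by (simp add: metric_def dLinv_def algebra_simps power2_eq_square)
  then show ?thesis
    unfolding dmetric_def has_real_derivative_iff_has_vector_derivative
    by (simp only: THE_vector_derivative_quadratic)
qed

lemma christoffel_eq:
  "christoffel br B p v w = -(1/2) *\<^sub>R dL p (jmap (dLinv br p w) v + jmap (dLinv br p v) w)"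
proof -
  let ?\<Gamma> = "-(1/2) *\<^sub>R dL p (jmap (dLinv br p w) v + jmap (dLinv br p v) w)"
  let ?P = "\<lambda>u. \<forall>z. metric br B p u z =
      (1/2) * (dmetric br B p v w z + dmetric br B p w v z - dmetric br B p z v w)"
  have "?P ?\<Gamma>"
  proof
    fix z
    have "br u (dLinv br p z) = br u z" for u
      by (simp add: dLinv_def)
    then show "metric br B p ?\<Gamma> z =
        (1/2) * (dmetric br B p v w z + dmetric br B p w v z - dmetric br B p z v w)"
      using br_antisym[of w v] br_antisym[of z v] br_antisym[of z w]
        B_sym[of "br v z" "dLinv br p w"]
      by (simp add: metric_def dmetric_eq B_jmap algebra_simps)
  qed
  moreover have "u = ?\<Gamma>" if "?P u" for u
  proof -
    have "metric br B p u y = metric br B p ?\<Gamma> y" for y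
      using that[rule_format, of y] \<open>?P ?\<Gamma>\<close>[rule_format, of y] by (simp only:)
    then have "B (dLinv br p u) z = B (dLinv br p ?\<Gamma>) z" for z
      unfolding metric_def by (metis dLinv_dL)
    then have "dLinv br p u = dLinv br p ?\<Gamma>"
      by (rule B_eqI)
    then show ?thesis
      by (metis dL_dLinv)
  qed
  ultimately show ?thesis
    unfolding christoffel_def by (rule the_equality)
qed

lemma dchristoffel_eq:
  "dchristoffel br B p a v w =
     (1/4) *\<^sub>R (dL p (jmap (br a w) v + jmap (br a v) w)
                - br a (jmap (dLinv br p w) v + jmap (dLinv br p v) w))"
proof -
  have "(\<lambda>s. christoffel br B (p + s *\<^sub>R a) v w) = (\<lambda>s. christoffel br B p v w
      + s *\<^sub>R ((1/4) *\<^sub>R (dL p (jmap (br a w) v + jmap (br a v) w)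
                - br a (jmap (dLinv br p w) v + jmap (dLinv br p v) w)))
      + s\<^sup>2 *\<^sub>R ((1/8) *\<^sub>R br a (jmap (br a w) v + jmap (br a v) w)))"
    by (simp add: christoffel_eq dL_def dLinv_def algebra_simps power2_eq_square)
  then show ?thesis
    unfolding dchristoffel_def by (simp only: THE_vector_derivative_quadratic)
qed

section \<open>Geodesics and Jacobi fields through the identity\<close>

lemma christoffel_diag: "christoffel br B p v v = - dL p (jmap (dLinv br p v) v)"
proof -
  have "christoffel br B p v v = -(1/2) *\<^sub>R dL p (2 *\<^sub>R jmap (dLinv br p v) v)"
    by (simp add: christoffel_eq scaleR_2)
  then show ?thesis
    by (simp add: dL_def algebra_simps)
qed

lemmas [derivative_intros] =
  br.has_vector_derivative B.has_vector_derivative j.has_vector_derivative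
  cproj.has_vector_derivative

lemma geodesic_euler_arnold:
  assumes "geodesic_on br B I \<gamma>" "t \<in> I"
  shows "((\<lambda>s. dLinv br (\<gamma> s) (vel \<gamma> s)) has_vector_derivative
           jmap (dLinv br (\<gamma> t) (vel \<gamma> t)) (vel \<gamma> t)) (at t)"
proof -
  obtain a where \<gamma>': "(\<gamma> has_vector_derivative vel \<gamma> t) (at t)"
    and v': "(vel \<gamma> has_vector_derivative a) (at t)"
    and a: "a + christoffel br B (\<gamma> t) (vel \<gamma> t) (vel \<gamma> t) = 0"
    using assms unfolding geodesic_on_def by (auto simp: has_vector_derivative_vel)
  have "((\<lambda>s. dLinv br (\<gamma> s) (vel \<gamma> s)) has_vector_derivative dLinv br (\<gamma> t) a) (at t)"
    unfolding dLinv_def by (auto intro!: derivative_eq_intros \<gamma>' v')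
  moreover have "a = dL (\<gamma> t) (jmap (dLinv br (\<gamma> t) (vel \<gamma> t)) (vel \<gamma> t))"
    using a by (simp add: christoffel_diag eq_neg_iff_add_eq_0)
  ultimately show ?thesis
    by simp
qed

lemma integral_curve_left_invariant:
  assumes I: "is_interval I" "0 \<in> I" "t \<in> I"
    and \<gamma>': "\<And>s. s \<in> I \<Longrightarrow> (\<gamma> has_vector_derivative dL (\<gamma> s) x0) (at s)"
    and "\<gamma> 0 = 0"
  shows "\<gamma> t = t *\<^sub>R x0"
proof -
  have "br (\<gamma> s) x0 = 0" if "s \<in> I" for s
  proof (rule antiderivative_unique_on_interval[OF I(1,2) that])
    show "((\<lambda>s. br (\<gamma> s) x0) has_vector_derivative 0) (at s)" if "s \<in> I" for s
      using br.has_vector_derivative[OF \<gamma>'[OF that] has_vector_derivative_const[of x0]]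
      by (simp add: dL_def)
  qed (use \<open>\<gamma> 0 = 0\<close> in simp_all)
  then have "(\<gamma> has_vector_derivative x0) (at s)" if "s \<in> I" for s
    using \<gamma>'[OF that] that by (simp add: dL_def)
  then show ?thesis
    by (rule antiderivative_unique_on_interval[OF I])
       (auto intro!: derivative_eq_intros simp: \<open>\<gamma> 0 = 0\<close>)
qed

lemma geodesic_from_0_is_line:
  assumes I: "is_interval I" "0 \<in> I" "t \<in> I"
    and geo: "geodesic_on br B I \<gamma>" and "\<gamma> 0 = 0" and x0: "vel \<gamma> 0 \<in> V"
  shows "\<gamma> t = t *\<^sub>R vel \<gamma> 0"
proof -
  define e where "e s = dLinv br (\<gamma> s) (vel \<gamma> s)" for s
  have e': "(e has_vector_derivative jmap (e s) (vel \<gamma> s)) (at s)" if "s \<in> I" for s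
    unfolding e_def by (rule geodesic_euler_arnold[OF geo that])
  have e0: "e 0 = vel \<gamma> 0"
    by (simp add: e_def dLinv_def \<open>\<gamma> 0 = 0\<close>)
  have eV: "e s \<in> V" if "s \<in> I" for s
  proof -
    have "B (e s) c = 0" if "c \<in> C" for c
    proof (rule antiderivative_unique_on_interval[OF I(1,2) \<open>s \<in> I\<close>])
      show "((\<lambda>s. B (e s) c) has_vector_derivative 0) (at s)" if "s \<in> I" for s
        using B.has_vector_derivative[OF e'[OF that] has_vector_derivative_const[of c]]
        by (simp add: B_jmap center_br_right[OF \<open>c \<in> C\<close>])
      show "B (e 0) c = 0"
        using e0 x0 \<open>c \<in> C\<close> by (simp add: B_orth_center)
    qed simp
    then show ?thesis
      by (simp add: orth_compl_def)
  qed
  have e_const: "e s = vel \<gamma> 0" if "s \<in> I" for s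
  proof (rule antiderivative_unique_on_interval[OF I(1,2) that])
    show "(e has_vector_derivative 0) (at s)" if "s \<in> I" for s
      using e'[OF that] jmap_orth_center_left[OF eV[OF that]] by simp
  qed (simp_all add: e0)
  have "(\<gamma> has_vector_derivative dL (\<gamma> s) (vel \<gamma> 0)) (at s)" if "s \<in> I" for s
  proof -
    have "(\<gamma> has_vector_derivative vel \<gamma> s) (at s)"
      using geo that unfolding geodesic_on_def by (simp add: has_vector_derivative_vel)
    moreover have "vel \<gamma> s = dL (\<gamma> s) (vel \<gamma> 0)"
      using dL_dLinv[of "\<gamma> s" "vel \<gamma> s"] e_const[OF that] unfolding e_def by simp
    ultimately show ?thesis
      by simp
  qed
  then show ?thesis
    using integral_curve_left_invariant[OF I] \<open>\<gamma> 0 = 0\<close> by blast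
qed

lemma vel_line [simp]: "vel (\<lambda>t. t *\<^sub>R x0) = (\<lambda>_. x0)"
  unfolding vel_def by (rule ext, rule vector_derivative_at) (auto intro!: derivative_eq_intros)

definition line_conn :: "'n \<Rightarrow> real \<Rightarrow> 'n \<Rightarrow> 'n" where
  "line_conn x0 t y = dL (t *\<^sub>R x0) (jmap (dLinv br (t *\<^sub>R x0) y) x0)"

lemma christoffel_line:
  assumes "x0 \<in> V"
  shows "christoffel br B (t *\<^sub>R x0) x0 y = -(1/2) *\<^sub>R line_conn x0 t y"
    and "christoffel br B (t *\<^sub>R x0) y x0 = -(1/2) *\<^sub>R line_conn x0 t y"
  using jmap_orth_center_left[OF assms]
  by (simp_all add: christoffel_eq line_conn_def dLinv_def add.commute)

lemma christoffel_line_diag: "x0 \<in> V \<Longrightarrow> christoffel br B (t *\<^sub>R x0) x0 x0 = 0"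
  by (simp add: christoffel_diag dLinv_def jmap_orth_center_left dL_def)

lemma geodesic_line: "x0 \<in> V \<Longrightarrow> geodesic_on br B I (\<lambda>t. t *\<^sub>R x0)"
  unfolding geodesic_on_def
  by (auto simp: christoffel_line_diag intro!: derivative_eq_intros)

lemma line_conn_derivative:
  assumes "(Y has_vector_derivative Y1) (at t)"
  shows "((\<lambda>s. line_conn x0 s (Y s)) has_vector_derivative
           line_conn x0 t Y1 + (1/2) *\<^sub>R (br x0 (jmap (Y t) x0) - jmap (br x0 (Y t)) x0)
             - (t/2) *\<^sub>R br x0 (jmap (br x0 (Y t)) x0)) (at t)"
  unfolding line_conn_def dL_def dLinv_def
  by (auto intro!: derivative_eq_intros assms simp: algebra_simps)

lemma curv_line:
  assumes "x0 \<in> V"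
  shows "curv br B (t *\<^sub>R x0) y x0 x0 =
     -(3/4) *\<^sub>R jmap (br x0 y) x0 + (1/4) *\<^sub>R br x0 (jmap y x0)
     - (t/2) *\<^sub>R br x0 (jmap (br x0 y) x0)"
  using jmap_orth_center_left[OF assms]
  by (simp add: curv_def dchristoffel_eq christoffel_line[OF assms] christoffel_line_diag[OF assms]
      line_conn_def dL_def dLinv_def br_antisym[of y x0] christoffel_eq algebra_simps)
     (rule euclidean_eqI; simp add: inner_simps field_simps)

lemma jacobi_on_line_iff:
  assumes x0: "x0 \<in> V" and I: "open I"
    and Y': "\<And>t. t \<in> I \<Longrightarrow> (Y has_vector_derivative Y1 t) (at t)"
    and Y'': "\<And>t. t \<in> I \<Longrightarrow> (Y1 has_vector_derivative Y2 t) (at t)"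
  shows "jacobi_on br B I (\<lambda>t. t *\<^sub>R x0) Y \<longleftrightarrow>
     (\<forall>t\<in>I. Y2 t = line_conn x0 t (Y1 t) + (1/2) *\<^sub>R jmap (br x0 (Y t)) x0
                   + (t/4) *\<^sub>R br x0 (jmap (br x0 (Y t)) x0))"
proof -
  let ?D = "covder br B (\<lambda>t. t *\<^sub>R x0)"
  have DY: "?D Y t = Y1 t - (1/2) *\<^sub>R line_conn x0 t (Y t)" if "t \<in> I" for t
    using vector_derivative_at[OF Y'[OF that]]
    by (simp add: covder_def christoffel_line[OF x0] vel_def)
  define D where "D t = Y2 t - (1/2) *\<^sub>R (line_conn x0 t (Y1 t)
      + (1/2) *\<^sub>R (br x0 (jmap (Y t) x0) - jmap (br x0 (Y t)) x0)
      - (t/2) *\<^sub>R br x0 (jmap (br x0 (Y t)) x0))" for t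
  have DY': "(?D Y has_vector_derivative D t) (at t)" if "t \<in> I" for t
  proof (rule has_vector_derivative_transform_within_open[OF _ I that])
    show "((\<lambda>s. Y1 s - (1/2) *\<^sub>R line_conn x0 s (Y s)) has_vector_derivative D t) (at t)"
      unfolding D_def
      by (intro has_vector_derivative_diff Y''[OF that]
          bounded_linear.has_vector_derivative[OF bounded_linear_scaleR_right]
          line_conn_derivative Y'[OF that])
  qed (simp add: DY)
  have jacobi_op: "?D (?D Y) t + curv br B (t *\<^sub>R x0) (Y t) x0 x0 =
      Y2 t - (line_conn x0 t (Y1 t) + (1/2) *\<^sub>R jmap (br x0 (Y t)) x0
                + (t/4) *\<^sub>R br x0 (jmap (br x0 (Y t)) x0))" if "t \<in> I" for t
  proof -
    have "vel (?D Y) t = D t"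
      unfolding vel_def by (rule vector_derivative_at[OF DY'[OF that]])
    then have DDY: "?D (?D Y) t = D t - (1/2) *\<^sub>R line_conn x0 t (?D Y t)"
      unfolding covder_def[of _ _ _ "?D Y"] by (simp add: christoffel_line[OF x0])
    show ?thesis
      unfolding DDY using jmap_orth_center_left[OF x0]
      by (simp add: DY[OF that] D_def curv_line[OF x0] line_conn_def dL_def dLinv_def
          algebra_simps)
         (rule euclidean_eqI; simp add: inner_simps field_simps)
  qed
  have "Y differentiable (at t) \<and> ?D Y differentiable (at t)" if "t \<in> I" for t
    using Y'[OF that] DY'[OF that] by (auto intro: differentiableI_vector)
  then show ?thesis
    unfolding jacobi_on_def using jacobi_op by simp
qed

lemma jacobi_on_line_derivatives:
  assumes x0: "x0 \<in> V" and J: "jacobi_on br B I (\<lambda>t. t *\<^sub>R x0) Y" and "t \<in> I"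
  shows "(Y has_vector_derivative vel Y t) (at t)"
    and "(vel Y has_vector_derivative vel (vel Y) t) (at t)"
proof -
  let ?D = "covder br B (\<lambda>t. t *\<^sub>R x0)"
  have Y': "(Y has_vector_derivative vel Y t) (at t)"
    and DY': "(?D Y has_vector_derivative vel (?D Y) t) (at t)"
    using J \<open>t \<in> I\<close> unfolding jacobi_on_def by (auto simp: has_vector_derivative_vel)
  have vel_eq: "(\<lambda>s. ?D Y s + (1/2) *\<^sub>R line_conn x0 s (Y s)) = vel Y"
    by (rule ext) (simp add: covder_def christoffel_line[OF x0])
  have "(\<lambda>s. ?D Y s + (1/2) *\<^sub>R line_conn x0 s (Y s)) differentiable (at t)"
    using differentiableI_vector[OF DY']
      differentiableI_vector[OF line_conn_derivative[OF Y', of x0]]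
    by (intro differentiable_add differentiable_scaleR differentiable_const)
  then have "vel Y differentiable (at t)"
    unfolding vel_eq .
  then show "(vel Y has_vector_derivative vel (vel Y) t) (at t)"
    by (rule has_vector_derivative_vel)
  show "(Y has_vector_derivative vel Y t) (at t)"
    by (rule Y')
qed

lemma jacobi_on_cong:
  assumes I: "open I" and eq: "\<And>t. t \<in> I \<Longrightarrow> \<gamma> t = \<gamma>' t"
  shows "jacobi_on br B I \<gamma> Y \<longleftrightarrow> jacobi_on br B I \<gamma>' Y"
proof -
  have vel_eq: "vel \<gamma> s = vel \<gamma>' s" if "s \<in> I" for s
    by (rule vel_cong_on_open[OF I that eq])
  have DY_eq: "covder br B \<gamma> Y s = covder br B \<gamma>' Y s" if "s \<in> I" for s
    using that by (simp add: covder_def vel_eq eq)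
  have "covder br B \<gamma> (covder br B \<gamma> Y) s = covder br B \<gamma>' (covder br B \<gamma>' Y) s"
    and "covder br B \<gamma> Y differentiable (at s) \<longleftrightarrow> covder br B \<gamma>' Y differentiable (at s)"
    if "s \<in> I" for s
    using that vel_cong_on_open[OF I that DY_eq] differentiable_cong_on_open[OF I that DY_eq]
    by (simp_all add: covder_def[of _ _ _ "covder br B _ Y"] vel_eq eq DY_eq)
  then show ?thesis
    unfolding jacobi_on_def using vel_eq eq by simp
qed

lemma jacobi_line_translated:
  assumes Y': "\<And>t. t \<in> I \<Longrightarrow> (Y has_vector_derivative Y1 t) (at t)"
    and Y'': "\<And>t. t \<in> I \<Longrightarrow> (Y1 has_vector_derivative Y2 t) (at t)"
    and jacobi: "\<And>t. t \<in> I \<Longrightarrow> Y2 t = line_conn x0 t (Y1 t)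
        + (1/2) *\<^sub>R jmap (br x0 (Y t)) x0 + (t/4) *\<^sub>R br x0 (jmap (br x0 (Y t)) x0)"
  obtains y1 y2
  where "\<And>t. t \<in> I \<Longrightarrow> ((\<lambda>s. dLinv br (s *\<^sub>R x0) (Y s)) has_vector_derivative y1 t) (at t)"
    and "\<And>t. t \<in> I \<Longrightarrow> (y1 has_vector_derivative y2 t) (at t)"
    and "\<And>t. t \<in> I \<Longrightarrow>
           y2 t = jmap (y1 t) x0 - br x0 (y1 t) + jmap (br x0 (dLinv br (t *\<^sub>R x0) (Y t))) x0"
proof
  define y1 where "y1 t = Y1 t - (1/2) *\<^sub>R br x0 (Y t) - (t/2) *\<^sub>R br x0 (Y1 t)" for t
  define y2 where "y2 t = Y2 t - br x0 (Y1 t) - (t/2) *\<^sub>R br x0 (Y2 t)" for t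
  show "((\<lambda>s. dLinv br (s *\<^sub>R x0) (Y s)) has_vector_derivative y1 t) (at t)" if "t \<in> I" for t
    unfolding dLinv_def y1_def
    by (auto intro!: derivative_eq_intros Y'[OF that] simp: algebra_simps)
  show "(y1 has_vector_derivative y2 t) (at t)" if "t \<in> I" for t
    unfolding y1_def[abs_def] y2_def
    by (auto intro!: derivative_eq_intros Y'[OF that] Y''[OF that] simp: algebra_simps)
       (simp flip: scaleR_add_left)
  show "y2 t = jmap (y1 t) x0 - br x0 (y1 t) + jmap (br x0 (dLinv br (t *\<^sub>R x0) (Y t))) x0"
    if "t \<in> I" for t
    unfolding y1_def y2_def jacobi[OF that]
    by (simp add: line_conn_def dL_def dLinv_def algebra_simps)
       (rule euclidean_eqI; simp add: inner_simps field_simps)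
qed

lemma translated_jacobi_first_integrals:
  assumes I: "is_interval I" "0 \<in> I" "t \<in> I"
    and y': "\<And>t. t \<in> I \<Longrightarrow> (y has_vector_derivative y1 t) (at t)"
    and y'': "\<And>t. t \<in> I \<Longrightarrow> (y1 has_vector_derivative y2 t) (at t)"
    and ode: "\<And>t. t \<in> I \<Longrightarrow> y2 t = jmap (y1 t) x0 - br x0 (y1 t) + jmap (br x0 (y t)) x0"
    and "y 0 = 0"
  shows "cproj (y1 t) + br x0 (y t) = cproj (y1 0)"
    and "y1 t - cproj (y1 t) - t *\<^sub>R jmap (cproj (y1 0)) x0 = y1 0 - cproj (y1 0)"
proof -
  have c: "cproj (y1 t) + br x0 (y t) = cproj (y1 0)" if "t \<in> I" for t
  proof (rule antiderivative_unique_on_interval[OF I(1,2) that, where h="\<lambda>_. 0"])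
    show "((\<lambda>t. cproj (y1 t) + br x0 (y t)) has_vector_derivative 0) (at s)" if "s \<in> I" for s
      by (auto intro!: derivative_eq_intros y'[OF that] y''[OF that] simp: ode[OF that])
  qed (simp_all add: \<open>y 0 = 0\<close>)
  then show "cproj (y1 t) + br x0 (y t) = cproj (y1 0)"
    using I(3) .
  show "y1 t - cproj (y1 t) - t *\<^sub>R jmap (cproj (y1 0)) x0 = y1 0 - cproj (y1 0)"
  proof (rule antiderivative_unique_on_interval[OF I, where h="\<lambda>_. 0"])
    show "((\<lambda>t. y1 t - cproj (y1 t) - t *\<^sub>R jmap (cproj (y1 0)) x0) has_vector_derivative 0) (at s)"
      if "s \<in> I" for s
      using arg_cong[OF c[OF that], of "\<lambda>a. jmap a x0"]
      by (auto intro!: derivative_eq_intros y''[OF that] simp: ode[OF that])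
  qed simp_all
qed

definition translated_jacobi :: "'n \<Rightarrow> 'n \<Rightarrow> 'n \<Rightarrow> real \<Rightarrow> 'n" where
  "translated_jacobi x0 c u t = t *\<^sub>R u + (t\<^sup>2/2) *\<^sub>R jmap c x0
      + t *\<^sub>R c - (t\<^sup>2/2) *\<^sub>R br x0 u - (t^3/6) *\<^sub>R br x0 (jmap c x0)"

lemma translated_jacobi_solution:
  assumes I: "is_interval I" "0 \<in> I"
    and y': "\<And>t. t \<in> I \<Longrightarrow> (y has_vector_derivative y1 t) (at t)"
    and y'': "\<And>t. t \<in> I \<Longrightarrow> (y1 has_vector_derivative y2 t) (at t)"
    and ode: "\<And>t. t \<in> I \<Longrightarrow> y2 t = jmap (y1 t) x0 - br x0 (y1 t) + jmap (br x0 (y t)) x0"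
    and "y 0 = 0"
  obtains c u where "c \<in> C" "u \<in> V" "\<And>t. t \<in> I \<Longrightarrow> y t = translated_jacobi x0 c u t"
proof
  define c where "c = cproj (y1 0)"
  define u where "u = y1 0 - cproj (y1 0)"
  show "c \<in> C" "u \<in> V"
    unfolding c_def u_def by (rule cproj_decomposition)+
  note first_integrals = translated_jacobi_first_integrals[OF I _ y' y'' ode \<open>y 0 = 0\<close>,
      folded c_def u_def]
  have v_part: "y t - cproj (y t) = t *\<^sub>R u + (t\<^sup>2/2) *\<^sub>R jmap c x0" if "t \<in> I" for t
  proof (rule antiderivative_unique_on_interval[OF I that])
    show "((\<lambda>t. y t - cproj (y t)) has_vector_derivative u + s *\<^sub>R jmap c x0) (at s)"
      if "s \<in> I" for s
      using first_integrals(2)[OF that]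
      by (auto intro!: derivative_eq_intros y'[OF that] simp: algebra_simps)
    show "((\<lambda>t. t *\<^sub>R u + (t\<^sup>2/2) *\<^sub>R jmap c x0) has_vector_derivative u + s *\<^sub>R jmap c x0) (at s)"
      for s
      by (auto intro!: derivative_eq_intros)
  qed (simp add: \<open>y 0 = 0\<close>)
  have z_part: "cproj (y t) = t *\<^sub>R c - (t\<^sup>2/2) *\<^sub>R br x0 u - (t^3/6) *\<^sub>R br x0 (jmap c x0)"
    if "t \<in> I" for t
  proof (rule antiderivative_unique_on_interval[OF I that])
    show "((\<lambda>t. cproj (y t)) has_vector_derivative
        c - s *\<^sub>R br x0 u - (s\<^sup>2/2) *\<^sub>R br x0 (jmap c x0)) (at s)" if "s \<in> I" for s
    proof -
      have "br x0 (y s) = br x0 (y s - cproj (y s))"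
        by simp
      then have "br x0 (y s) = s *\<^sub>R br x0 u + (s\<^sup>2/2) *\<^sub>R br x0 (jmap c x0)"
        by (simp add: v_part[OF that])
      then show ?thesis
        using first_integrals(1)[OF that]
        by (auto intro!: derivative_eq_intros y'[OF that] simp: algebra_simps)
    qed
    show "((\<lambda>t. t *\<^sub>R c - (t\<^sup>2/2) *\<^sub>R br x0 u - (t^3/6) *\<^sub>R br x0 (jmap c x0))
        has_vector_derivative c - s *\<^sub>R br x0 u - (s\<^sup>2/2) *\<^sub>R br x0 (jmap c x0)) (at s)" for s
      by (auto intro!: derivative_eq_intros simp: power2_eq_square)
  qed (simp add: \<open>y 0 = 0\<close>)
  show "y t = translated_jacobi x0 c u t" if "t \<in> I" for t
    using v_part[OF that] z_part[OF that] by (simp add: translated_jacobi_def algebra_simps)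
qed

lemma jacobi_field_on_line:
  assumes x0: "x0 \<in> V" and I: "is_interval I" "open I" "0 \<in> I"
    and J: "jacobi_on br B I (\<lambda>s. s *\<^sub>R x0) Y" and "Y 0 = 0"
  obtains c u where "c \<in> C" "u \<in> V"
    "\<And>s. s \<in> I \<Longrightarrow> dLinv br (s *\<^sub>R x0) (Y s) = translated_jacobi x0 c u s"
proof -
  note Y' = jacobi_on_line_derivatives(1)[OF x0 J]
    and Y'' = jacobi_on_line_derivatives(2)[OF x0 J]
  have jacobi: "vel (vel Y) s = line_conn x0 s (vel Y s) + (1/2) *\<^sub>R jmap (br x0 (Y s)) x0
      + (s/4) *\<^sub>R br x0 (jmap (br x0 (Y s)) x0)" if "s \<in> I" for s
    using J jacobi_on_line_iff[OF x0 I(2) Y' Y''] that by blast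
  obtain y1 y2
    where y': "\<And>s. s \<in> I \<Longrightarrow> ((\<lambda>s. dLinv br (s *\<^sub>R x0) (Y s)) has_vector_derivative y1 s) (at s)"
      and y'': "\<And>s. s \<in> I \<Longrightarrow> (y1 has_vector_derivative y2 s) (at s)"
      and ode: "\<And>s. s \<in> I \<Longrightarrow>
             y2 s = jmap (y1 s) x0 - br x0 (y1 s) + jmap (br x0 (dLinv br (s *\<^sub>R x0) (Y s))) x0"
    using jacobi_line_translated[where I=I, OF Y' Y'' jacobi] by blast
  have "dLinv br (0 *\<^sub>R x0) (Y 0) = 0"
    using \<open>Y 0 = 0\<close> by (simp add: dLinv_def)
  then show ?thesis
    using translated_jacobi_solution[where y="\<lambda>s. dLinv br (s *\<^sub>R x0) (Y s)",
          OF I(1,3) y' y'' ode] that by blast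
qed

section \<open>The conjugate locus\<close>

definition conj_map :: "'n \<Rightarrow> 'n \<Rightarrow> 'n" where
  "conj_map x c = c + (1/12) *\<^sub>R br x (jmap c x)"

lemma linear_conj_map: "linear (conj_map x)"
  by (rule linearI) (simp_all add: conj_map_def algebra_simps)

lemma translated_jacobi_eq_0:
  assumes "c \<in> C" "u \<in> V" "t \<noteq> 0" and zero: "translated_jacobi x0 c u t = 0"
  shows "u = -(t/2) *\<^sub>R jmap c x0" and "conj_map (t *\<^sub>R x0) c = 0"
proof -
  let ?z = "t *\<^sub>R c - (t\<^sup>2/2) *\<^sub>R br x0 u - (t^3/6) *\<^sub>R br x0 (jmap c x0)"
  have "cproj ?z = 0"
    using arg_cong[OF zero, of cproj] cproj_center[OF \<open>c \<in> C\<close>] cproj_orth_center[OF \<open>u \<in> V\<close>]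
    by (simp add: translated_jacobi_def algebra_simps)
  then have z: "?z = 0"
    using cproj_center[OF \<open>c \<in> C\<close>] by simp
  then have "t *\<^sub>R (u + (t/2) *\<^sub>R jmap c x0) = 0"
    using zero by (simp add: translated_jacobi_def algebra_simps power2_eq_square)
  then show u: "u = -(t/2) *\<^sub>R jmap c x0"
    using \<open>t \<noteq> 0\<close> by (simp add: eq_neg_iff_add_eq_0)
  have "t *\<^sub>R conj_map (t *\<^sub>R x0) c = ?z"
    unfolding u conj_map_def
    by (simp add: algebra_simps power2_eq_square power3_eq_cube)
       (rule euclidean_eqI; simp add: inner_simps field_simps)
  then show "conj_map (t *\<^sub>R x0) c = 0"
    using z \<open>t \<noteq> 0\<close> by simp
qed

lemma conj_locus_subset: "conj_locus br B \<subseteq> {x \<in> V. \<exists>c. c \<noteq> 0 \<and> conj_map x c = 0}"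
proof
  fix p
  assume "p \<in> conj_locus br B"
  then obtain \<gamma> I t where I: "is_interval I" "open I" "0 \<in> I" "t \<in> I" "t \<noteq> 0"
    and geo: "geodesic_on br B I \<gamma>" and "\<gamma> 0 = 0" and x0: "vel \<gamma> 0 \<in> V"
    and conj: "conjugate_along br B I \<gamma> t" and p: "p = \<gamma> t"
    unfolding conj_locus_def by blast
  have line: "\<gamma> s = s *\<^sub>R vel \<gamma> 0" if "s \<in> I" for s
    by (rule geodesic_from_0_is_line[OF I(1,3) that geo \<open>\<gamma> 0 = 0\<close> x0])
  obtain Y where "jacobi_on br B I \<gamma> Y" "\<exists>s\<in>I. Y s \<noteq> 0" "Y 0 = 0" "Y t = 0"
    using conj unfolding conjugate_along_def by blast
  then have "jacobi_on br B I (\<lambda>s. s *\<^sub>R vel \<gamma> 0) Y"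
    using jacobi_on_cong[OF I(2) line] by simp
  then obtain c u where c: "c \<in> C" and u: "u \<in> V"
    and y: "\<And>s. s \<in> I \<Longrightarrow> dLinv br (s *\<^sub>R vel \<gamma> 0) (Y s) = translated_jacobi (vel \<gamma> 0) c u s"
    using jacobi_field_on_line[OF x0 I(1-3)] \<open>Y 0 = 0\<close> by blast
  have "translated_jacobi (vel \<gamma> 0) c u t = 0"
    using y[OF I(4)] \<open>Y t = 0\<close> by (simp add: dLinv_def)
  note vanish = translated_jacobi_eq_0[OF c u \<open>t \<noteq> 0\<close> this]
  have "c \<noteq> 0"
  proof
    assume "c = 0"
    then have "Y s = 0" if "s \<in> I" for s
      using y[OF that] vanish(1) dL_dLinv[of "s *\<^sub>R vel \<gamma> 0" "Y s"]
      by (simp add: translated_jacobi_def dL_def)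
    then show False
      using \<open>\<exists>s\<in>I. Y s \<noteq> 0\<close> by blast
  qed
  moreover have "t *\<^sub>R vel \<gamma> 0 \<in> V"
    using subspace_scale[OF subspace_orth_center x0] by simp
  ultimately show "p \<in> {x \<in> V. \<exists>c. c \<noteq> 0 \<and> conj_map x c = 0}"
    using vanish(2) p line[OF I(4)] by auto
qed

text \<open>
  The Jacobi field with translated data c and u = -j(c)x/2, which by translated_jacobi_eq_0
  vanishes at t = 1 when c + [x, j(c)x]/12 = 0.
\<close>

lemma jacobi_field_on_line_explicit:
  assumes x: "x \<in> V" and c: "c \<in> C" and xA: "br x (jmap c x) = (-12) *\<^sub>R c"
  shows "jacobi_on br B UNIV (\<lambda>s. s *\<^sub>R x)
           (\<lambda>s. ((s\<^sup>2 - s)/2) *\<^sub>R jmap c x + (s - s^3) *\<^sub>R c)"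
proof -
  define A where "A = jmap c x"
  define Y1 where "Y1 s = (s - 1/2) *\<^sub>R A + (1 - 3 * s\<^sup>2) *\<^sub>R c" for s
  define Y2 where "Y2 s = A - (6 * s) *\<^sub>R c" for s
  have Y': "((\<lambda>s. ((s\<^sup>2 - s)/2) *\<^sub>R A + (s - s^3) *\<^sub>R c) has_vector_derivative Y1 s) (at s)" for s
    unfolding Y1_def
    by (auto intro!: derivative_eq_intros simp: algebra_simps power2_eq_square)
       (rule euclidean_eqI; simp add: inner_simps field_simps power2_eq_square)
  have Y'': "(Y1 has_vector_derivative Y2 s) (at s)" for s
    unfolding Y1_def Y2_def
    by (auto intro!: derivative_eq_intros simp: algebra_simps power2_eq_square)
  show ?thesis
    unfolding A_def[symmetric] jacobi_on_line_iff[OF x open_UNIV Y' Y'']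
  proof
    fix s :: real
    let ?Y = "((s\<^sup>2 - s)/2) *\<^sub>R A + (s - s^3) *\<^sub>R c"
    show "Y2 s = line_conn x s (Y1 s) + (1/2) *\<^sub>R jmap (br x ?Y) x
        + (s/4) *\<^sub>R br x (jmap (br x ?Y) x)"
      unfolding line_conn_def Y1_def Y2_def
      using xA center_br_right[OF c, of x] jmap_jmap_left[of c x x]
      by (simp add: dL_def dLinv_def A_def[symmetric] algebra_simps)
         (rule euclidean_eqI; simp add: inner_simps field_simps power2_eq_square power3_eq_cube)
  qed
qed

lemma conj_locus_supset: "{x \<in> V. \<exists>c. c \<noteq> 0 \<and> conj_map x c = 0} \<subseteq> conj_locus br B"
proof
  fix x
  assume "x \<in> {x \<in> V. \<exists>c. c \<noteq> 0 \<and> conj_map x c = 0}"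
  then obtain c where x: "x \<in> V" and "c \<noteq> 0" and "conj_map x c = 0"
    by blast
  have "(12::real) *\<^sub>R conj_map x c = 0"
    using \<open>conj_map x c = 0\<close> by simp
  then have xA: "br x (jmap c x) = (-12) *\<^sub>R c"
    unfolding conj_map_def by (simp add: eq_neg_iff_add_eq_0 algebra_simps)
  then have "c \<in> C"
    using subspace_scale[OF subspace_center br_in_center, of "-1/12" x "jmap c x"] by simp
  have "jmap c x \<noteq> 0"
    using xA \<open>c \<noteq> 0\<close> by auto
  then have "x \<noteq> 0"
    by auto
  define Y where "Y s = ((s\<^sup>2 - s)/2) *\<^sub>R jmap c x + (s - s^3) *\<^sub>R c" for s
  have "jacobi_on br B UNIV (\<lambda>s. s *\<^sub>R x) Y"
    unfolding Y_def[abs_def] by (rule jacobi_field_on_line_explicit[OF x \<open>c \<in> C\<close> xA])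
  moreover have "Y (-1) \<noteq> 0" "Y 0 = 0" "Y 1 = 0"
    using \<open>jmap c x \<noteq> 0\<close> by (simp_all add: Y_def)
  ultimately have "conjugate_along br B UNIV (\<lambda>s. s *\<^sub>R x) 1"
    unfolding conjugate_along_def by blast
  then show "x \<in> conj_locus br B"
    unfolding conj_locus_def using geodesic_line[OF x] x \<open>x \<noteq> 0\<close>
    by (intro CollectI exI[of _ "\<lambda>s. s *\<^sub>R x"] exI[of _ UNIV] exI[of _ 1]) simp
qed

lemma conj_locus_eq: "conj_locus br B = {x \<in> V. \<exists>c. c \<noteq> 0 \<and> conj_map x c = 0}"
  using conj_locus_subset conj_locus_supset by (rule equalityI)

lemma real_polynomial_function_det_conj_map:
  "real_polynomial_function (\<lambda>x. Determinant.det (coord_matrix (conj_map x)))"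
proof (rule real_polynomial_function_det_coord_matrix)
  fix b e :: 'n
  have "bilinear (\<lambda>x y. inner (br x (jmap b y)) e / 12)"
    unfolding bilinear_def by (auto intro!: linearI simp: inner_add_left add_divide_distrib)
  then have "real_polynomial_function (\<lambda>x. inner (br x (jmap b x)) e / 12)"
    by (rule real_polynomial_function_bilinear_diag)
  then show "real_polynomial_function (\<lambda>x. inner (conj_map x b) e)"
    by (simp add: conj_map_def inner_add_left real_polynomial_function.intros(2,3))
qed

lemma real_analytic_subset_conj_locus: "real_analytic_subset V (conj_locus br B)"
proof -
  let ?f = "\<lambda>x. Determinant.det (coord_matrix (conj_map x))"
  have "conj_locus br B = {x \<in> V. ?f x = 0}"
    unfolding conj_locus_eq det_coord_matrix_eq_0_iff[OF linear_conj_map] ..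
  moreover have "real_analytic_on UNIV ?f"
    unfolding real_analytic_on_def
    using real_polynomial_function_analytic[OF real_polynomial_function_det_conj_map] by blast
  ultimately show ?thesis
    unfolding real_analytic_subset_def
    by (intro conjI ballI exI[of _ UNIV] exI[of _ "{?f}"]) auto
qed

end

theorem mainTheorem4:
  fixes br :: "'n::euclidean_space \<Rightarrow> 'n \<Rightarrow> 'n" and B :: "'n \<Rightarrow> 'n \<Rightarrow> real"
  assumes "two_step_nilpotent br"
    and "scalar_product B"
    and "nondeg_on B (center br)"
  shows "conj_locus br B \<subseteq> orth_compl B (center br) \<and>
         real_analytic_subset (orth_compl B (center br)) (conj_locus br B)"
proof -
  interpret two_step_metric br B
    using assms by unfold_locales
  show ?thesis
    using real_analytic_subset_conj_locus unfolding real_analytic_subset_def by blast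
qed

end
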